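(* Let $r$ be a rational number with $0<r<1$ and $r\neq1/p$ for every integer $p\ge2$, written $r=[m_1,\dots,m_k]$ with $k\ge2$, $m_i\in\mathbb{Z}_{>0}$, $m_k\ge2$, and let $(S_1,S_2,S_1,S_2)$ be the decomposition of $CS(r)$ described in the context; put $m=m_1$. (1) If $k$ is even and $s$ is a rational number with $[m_1,\dots,m_{k-1},m_k-1]<s\le[m_1,\dots,m_{k-1},m_k-1,2]$, then $CS(s)$ contains $(m+1,S_{2e},S_1,S_2,S_1,S_{2b},m+1)$ as a subsequence, where $S_{2e},S_{2b}$ are defined by $(m,S_{2e})=(S_{2b},m)=S_2$. (2) If $k$ is odd and $s$ is a rational number with $[m_1,\dots,m_{k-1},m_k-1,2]\le s<[m_1,\dots,m_{k-1},m_k-1]$, then $CS(s)$ contains $(m,S_{1e},S_2,S_1,S_2,S_{1b},m)$ as a subsequence, where $S_{1e},S_{1b}$ are defined by $(m+1,S_{1e})=(S_{1b},m+1)=S_1$.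
   Context: Continued fractions: $[m_1,\dots,m_k]=1/(m_1+1/(m_2+\cdots+1/m_k))$. For $s\in\mathbb{Q}\cup\{\infty\}$, $u_s$ is the cyclically reduced, cyclically alternating word in the free group $F(a,b)$ representing the simple loop of slope $s$ on the 4-punctured 2-bridge sphere in the upper tangle complement (well defined up to cyclic permutation and inversion). For a cyclically reduced cyclic word $(w)$, decompose it cyclically into maximal subwords alternately positive (all exponents $+1$) and negative (all exponents $-1$); $CS(w)$ is the cyclic sequence of their lengths, and $CS(s):=CS(u_s)$. $CS(r)$ consists of $m$ and $m+1$ and has a decomposition $CS(r)=((S_1,S_2,S_1,S_2))$ in which each $S_i$ is symmetric (equal to its reverse) and occurs only twice in $CS(r)$, $S_1$ begins and ends with $m+1$, and $S_2$ begins and ends with $m$; this is the decomposition meant. "Contains as a subsequence" means occurs as a block of consecutive terms of the cyclic sequence. *)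

theory Defs
  imports Complex_Main "HOL-Library.Sublist"
begin

fun cf :: "nat list \<Rightarrow> rat" where
  "cf [] = 0"
| "cf (m # ms) = 1 / (of_nat m + cf ms)"

datatype gen = GA | GB

text \<open>For s = q/p (p > 0, gcd(p,q) = 1) the word u_s is
  a^(e_1) b^(e_2) a^(e_3) ... a^(e_(2p-1)) b^(e_(2p)),  e_i = (-1)^floor((i-1)q/p)
  (Lee--Sakuma's formula).\<close>
definition u_word :: "rat \<Rightarrow> (gen \<times> int) list" where
  "u_word s = (let (q, p) = quotient_of s in
     map (\<lambda>j. (if even j then GA else GB,
                if even ((int j * q) div p) then 1 else -1)) [0..<2 * nat p])"

function runs :: "'a list \<Rightarrow> nat list" where
  "runs [] = []"
| "runs (x # xs) = length (takeWhile (\<lambda>y. y = x) (x # xs)) # runs (dropWhile (\<lambda>y. y = x) xs)"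
  by pat_completeness auto
termination
  by (relation "measure length") (auto simp: le_imp_less_Suc length_dropWhile_le)

text \<open>Cyclic sequence of lengths of maximal cyclic runs of equal exponent sign
  (positive / negative subwords); returned as a list representing it up to rotation.\<close>
definition CS_signs :: "int list \<Rightarrow> nat list" where
  "CS_signs e = (if \<exists>n<length e. e ! n \<noteq> e ! ((n + length e - 1) mod length e)
     then runs (rotate (LEAST n. n < length e \<and> e ! n \<noteq> e ! ((n + length e - 1) mod length e)) e)
     else [length e])"

definition CS_word :: "(gen \<times> int) list \<Rightarrow> nat list" where
  "CS_word w = CS_signs (map snd w)"

definition CS :: "rat \<Rightarrow> nat list" where
  "CS s = CS_word (u_word s)"

definition cyc_contains :: "nat list \<Rightarrow> nat list \<Rightarrow> bool" where
  "cyc_contains C T \<longleftrightarrow> length T \<le> length C \<and> (\<exists>n. prefix T (rotate n C))"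

definition cyc_occ :: "nat list \<Rightarrow> nat list \<Rightarrow> nat" where
  "cyc_occ C T = card {n. n < length C \<and> prefix T (rotate n C)}"

definition CS_decomp :: "nat list \<Rightarrow> nat \<Rightarrow> nat list \<Rightarrow> nat list \<Rightarrow> bool" where
  "CS_decomp C m S1 S2 \<longleftrightarrow>
     (\<exists>n. rotate n C = S1 @ S2 @ S1 @ S2) \<and>
     rev S1 = S1 \<and> rev S2 = S2 \<and>
     cyc_occ C S1 = 2 \<and> cyc_occ C S2 = 2 \<and>
     S1 \<noteq> [] \<and> hd S1 = m + 1 \<and> last S1 = m + 1 \<and>
     S2 \<noteq> [] \<and> hd S2 = m \<and> last S2 = m"

end

(*
  CS(q/p) is the sequence of block lengths \<lceil>(t+1)p/q\<rceil> - \<lceil>tp/q\<rceil>, t = 0, ..., 2q-1, and is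
  periodic with period q.  Write r = Q/P and let u be the inverse of P modulo Q, so that u/v and
  Q/P are Farey neighbours.  Shifting t by u leaves the terms of CS(r) unchanged except next to
  multiples of Q; as S1 and S2 occur only twice, this pins S1 down as the terms 0, ..., u-1 and S2
  as the terms u, ..., Q-1.  In either range, s = q/p is a positive combination of two Farey
  neighbours of r, and the partial sums \<lceil>tp/q\<rceil> of CS(s) and \<lceil>tP/Q\<rceil> of CS(r) agree inside
  a window of length 3Q-u (resp. 2Q+u) and differ by one, with opposite signs, at its two ends.
  So CS(s) contains S2 S1 S2 S1 S2 (resp. S1 S2 S1 S2 S1) with both end terms changed by one.
*)

theory Submission
  imports Defs
begin

section \<open>Ceiling division\<close>

definition ceil_div :: "int \<Rightarrow> int \<Rightarrow> int" where
  "ceil_div a b = - ((- a) div b)"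

lemma ceil_div_bounds:
  assumes "b > 0"
  shows "(ceil_div a b - 1) * b < a" and "a \<le> ceil_div a b * b"
proof -
  have "- a = b * ((- a) div b) + (- a) mod b" "0 \<le> (- a) mod b" "(- a) mod b < b"
    using assms by simp_all
  moreover have "(ceil_div a b - 1) * b = - (b * ((- a) div b)) - b" "ceil_div a b * b = - (b * ((- a) div b))"
    unfolding ceil_div_def by (simp_all add: algebra_simps)
  ultimately show "(ceil_div a b - 1) * b < a" "a \<le> ceil_div a b * b"
    by linarith+
qed

lemma ceil_div_unique:
  assumes "b > 0" "(n - 1) * b < a" "a \<le> n * b"
  shows "ceil_div a b = n"
proof -
  have "- a = b * (- n) + (n * b - a)"
    by (simp add: algebra_simps)
  then have "(- a) div b = - n"
    using assms int_div_pos_eq[of "- a" b "- n" "n * b - a"] by (auto simp: algebra_simps)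
  then show ?thesis
    unfolding ceil_div_def by simp
qed

lemma ceil_div_le_iff:
  assumes "b > 0"
  shows "ceil_div a b \<le> j \<longleftrightarrow> a \<le> j * b"
proof
  assume "ceil_div a b \<le> j"
  then show "a \<le> j * b"
    using ceil_div_bounds(2)[OF assms, of a] assms by (meson mult_right_mono order_trans less_imp_le)
next
  assume "a \<le> j * b"
  then have "(ceil_div a b - 1) * b < j * b"
    using ceil_div_bounds(1)[OF assms, of a] by linarith
  then show "ceil_div a b \<le> j"
    using assms by (simp add: mult_less_cancel_right)
qed

lemma ceil_div_add_mult:
  assumes "b > 0"
  shows "ceil_div (a + c * b) b = ceil_div a b + c"
  using ceil_div_bounds[OF assms, of a] assms by (intro ceil_div_unique) (auto simp: algebra_simps)

lemma ceil_div_mult: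
  assumes "b > 0"
  shows "ceil_div (c * b) b = c"
  using ceil_div_add_mult[OF assms, of 0 c] by (simp add: ceil_div_def)

lemma ceil_div_mult_mult:
  assumes "c > 0"
  shows "ceil_div (a * c) (b * c) = ceil_div a b"
  unfolding ceil_div_def using assms by (metis div_mult_mult2 less_irrefl mult_minus_left)

lemma ceil_div_nonneg:
  assumes "b > 0" "a \<ge> 0"
  shows "ceil_div a b \<ge> 0"
  using ceil_div_le_iff[OF assms(1), of a "-1"] assms by linarith

lemma div_eq_of_ceil_div_bounds:
  assumes "q > 0" "p > 0" "ceil_div (t * p) q \<le> j" "j < ceil_div ((t + 1) * p) q"
  shows "j * q div p = t"
proof -
  have "t * p \<le> j * q" "\<not> (t + 1) * p \<le> j * q"
    using assms ceil_div_le_iff[OF assms(1)] by (simp_all add: not_le[symmetric])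
  then show ?thesis
    using int_div_pos_eq[of "j * q" p t "j * q - p * t"] assms(2) by (simp add: algebra_simps)
qed

lemma ceil_div_succ:
  assumes "b > 0" "\<not> b dvd a"
  shows "ceil_div (a + 1) b = ceil_div a b"
proof -
  have "a \<noteq> ceil_div a b * b"
    using assms(2) by (metis dvd_triv_right)
  then show ?thesis
    using ceil_div_bounds[OF assms(1), of a] assms(1) by (intro ceil_div_unique) auto
qed

section \<open>The cyclic sequence \<open>CS(q/p)\<close>\<close>

text \<open>For \<open>s = q/p\<close> the \<open>t\<close>-th term of \<open>CS(s)\<close> is \<open>\<lceil>(t+1)p/q\<rceil> - \<lceil>tp/q\<rceil>\<close>, the number of
  exponents \<open>e\<^sub>j\<close> with \<open>\<lfloor>jq/p\<rfloor> = t\<close>.\<close>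

definition cs_term :: "int \<Rightarrow> int \<Rightarrow> int \<Rightarrow> int" where
  "cs_term p q t = ceil_div ((t + 1) * p) q - ceil_div (t * p) q"

definition cs_seg :: "int \<Rightarrow> int \<Rightarrow> int \<Rightarrow> nat \<Rightarrow> nat list" where
  "cs_seg p q a n = map (\<lambda>l. nat (cs_term p q (a + int l))) [0..<n]"

lemma cs_term_periodic:
  assumes "q > 0"
  shows "cs_term p q (t + k * q) = cs_term p q t"
proof -
  have "(t + k * q + 1) * p = (t + 1) * p + (k * p) * q" "(t + k * q) * p = t * p + (k * p) * q"
    by (simp_all add: algebra_simps)
  then show ?thesis
    unfolding cs_term_def using ceil_div_add_mult[OF assms] by simp
qed

lemma cs_term_ge_1:
  assumes "0 < q" "q < p"
  shows "cs_term p q t \<ge> 1"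
proof -
  have "ceil_div (t * p) q * q < t * p + q" "t * p + p \<le> ceil_div ((t + 1) * p) q * q"
    using ceil_div_bounds[OF assms(1), of "t * p"] ceil_div_bounds[OF assms(1), of "(t + 1) * p"]
    by (simp_all add: algebra_simps)
  then have "ceil_div (t * p) q * q < ceil_div ((t + 1) * p) q * q"
    using assms by linarith
  then show ?thesis
    unfolding cs_term_def using assms by (simp add: mult_less_cancel_right)
qed

lemma length_cs_seg [simp]: "length (cs_seg p q a n) = n"
  by (simp add: cs_seg_def)

lemma cs_seg_eq_Nil_iff [simp]: "cs_seg p q a n = [] \<longleftrightarrow> n = 0"
  by (simp add: cs_seg_def)

lemma nth_cs_seg [simp]: "l < n \<Longrightarrow> cs_seg p q a n ! l = nat (cs_term p q (a + int l))"
  by (simp add: cs_seg_def)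

lemma cs_seg_append: "cs_seg p q a (m + n) = cs_seg p q a m @ cs_seg p q (a + int m) n"
  by (rule nth_equalityI) (auto simp: nth_append algebra_simps)

lemma take_cs_seg: "n \<le> N \<Longrightarrow> take n (cs_seg p q a N) = cs_seg p q a n"
  by (rule nth_equalityI) auto

lemma cs_seg_periodic:
  assumes "q > 0"
  shows "cs_seg p q (a + k * q) n = cs_seg p q a n"
proof (rule nth_equalityI)
  fix l assume "l < length (cs_seg p q (a + k * q) n)"
  moreover have "cs_term p q (a + k * q + int l) = cs_term p q (a + int l)"
    using cs_term_periodic[OF assms, of p "a + int l" k] by (simp add: algebra_simps)
  ultimately show "cs_seg p q (a + k * q) n ! l = cs_seg p q a n ! l"
    by simp
qed simp

lemma cs_seg_add_multiple:
  assumes "q > 0" "q dvd b"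
  shows "cs_seg p q (a + b) n = cs_seg p q a n"
  using assms cs_seg_periodic[OF assms(1)] by (metis dvd_def mult.commute)

lemma cs_seg_mod:
  assumes "q > 0"
  shows "cs_seg p q (a mod (2 * q)) n = cs_seg p q a n"
proof -
  have "a mod (2 * q) = a + (- (2 * (a div (2 * q)))) * q"
    by (simp add: algebra_simps minus_div_mult_eq_mod[symmetric])
  then show ?thesis
    using cs_seg_periodic[OF assms] by metis
qed

lemma rotate_cs_seg:
  assumes "q > 0"
  shows "rotate k (cs_seg p q 0 (2 * nat q)) = cs_seg p q (int k) (2 * nat q)"
proof (rule nth_equalityI)
  fix l assume "l < length (rotate k (cs_seg p q 0 (2 * nat q)))"
  then have l: "l < 2 * nat q" by simp
  have "int ((k + l) mod (2 * nat q)) = (int k + int l) mod (2 * q)"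
    using assms by (simp add: of_nat_mod)
  moreover have "(k + l) mod (2 * nat q) < 2 * nat q"
    using l by simp
  ultimately have "cs_seg p q 0 (2 * nat q) ! ((k + l) mod (2 * nat q))
      = nat (cs_term p q ((int k + int l) mod (2 * q)))"
    by simp
  also have "\<dots> = nat (cs_term p q (int k + int l))"
    using arg_cong[OF cs_seg_mod[OF assms, where a = "int k + int l" and p = p and n = 1], of "\<lambda>xs. xs ! 0"] by simp
  finally show "rotate k (cs_seg p q 0 (2 * nat q)) ! l = cs_seg p q (int k) (2 * nat q) ! l"
    using l by (simp add: nth_rotate)
qed simp

lemma prefix_rotate_cs_seg_iff:
  assumes "q > 0" "length W \<le> 2 * nat q"
  shows "prefix W (rotate k (cs_seg p q 0 (2 * nat q))) \<longleftrightarrow> W = cs_seg p q (int k) (length W)"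
proof -
  have "prefix W (cs_seg p q (int k) (2 * nat q)) \<longleftrightarrow> W = take (length W) (cs_seg p q (int k) (2 * nat q))"
    unfolding prefix_def by (metis append_eq_conv_conj)
  then show ?thesis
    using assms by (simp add: rotate_cs_seg take_cs_seg)
qed

lemma cyc_contains_cs_seg:
  assumes "q > 0" "n \<le> 2 * nat q"
  shows "cyc_contains (cs_seg p q 0 (2 * nat q)) (cs_seg p q a n)"
proof -
  have "int (nat (a mod (2 * q))) = a mod (2 * q)"
    using assms(1) by simp
  then have "cs_seg p q a n = cs_seg p q (int (nat (a mod (2 * q)))) n"
    using cs_seg_mod[OF assms(1)] by simp
  then have "prefix (cs_seg p q a n) (rotate (nat (a mod (2 * q))) (cs_seg p q 0 (2 * nat q)))"
    using assms prefix_rotate_cs_seg_iff[OF assms(1)] by simp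
  then show ?thesis
    unfolding cyc_contains_def using assms(2) by auto
qed

lemma runs_replicate_append:
  assumes "k > 0" "rest = [] \<or> hd rest \<noteq> y"
  shows "runs (replicate k y @ rest) = k # runs rest"
proof -
  obtain k' where k: "k = Suc k'"
    using assms(1) by (cases k) auto
  have "takeWhile (\<lambda>z. z = y) rest = []" "dropWhile (\<lambda>z. z = y) rest = rest"
    using assms(2) by (cases rest; auto)+
  then have "takeWhile (\<lambda>z. z = y) (replicate k' y @ rest) = replicate k' y"
    "dropWhile (\<lambda>z. z = y) (replicate k' y @ rest) = rest"
    by (induction k') auto
  then show ?thesis
    by (simp add: k)
qed

lemma runs_concat_replicate:
  assumes "\<And>t. n t > 0" "\<And>t. x t \<noteq> x (Suc t)"
  shows "runs (concat (map (\<lambda>t. replicate (n t) (x t)) [a..<b])) = map n [a..<b]"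
proof (induction "b - a" arbitrary: a)
  case 0
  then show ?case by simp
next
  case (Suc d)
  then have up: "[a..<b] = a # [Suc a..<b]"
    by (simp add: upt_conv_Cons)
  have IH: "runs (concat (map (\<lambda>t. replicate (n t) (x t)) [Suc a..<b])) = map n [Suc a..<b]"
    using Suc by simp
  have hd: "concat (map (\<lambda>t. replicate (n t) (x t)) [Suc a..<b]) = [] \<or>
        hd (concat (map (\<lambda>t. replicate (n t) (x t)) [Suc a..<b])) \<noteq> x a"
  proof (cases "Suc a < b")
    case True
    moreover obtain k where "n (Suc a) = Suc k"
      using assms(1) by (metis gr0_implies_Suc)
    ultimately show ?thesis
      using assms(2)[of a] by (simp add: upt_conv_Cons)
  qed simp
  then show ?case
    using runs_replicate_append[OF assms(1) hd] IH by (simp add: up)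
qed

text \<open>With \<open>hd e \<noteq> last e\<close> no maximal run wraps around, so \<open>CS_signs\<close> just reads off the runs.\<close>

lemma CS_signs_eq_runs:
  assumes "e \<noteq> []" "hd e \<noteq> last e"
  shows "CS_signs e = runs e"
proof -
  have "e ! 0 \<noteq> e ! ((0 + length e - 1) mod length e)"
    using assms by (simp add: hd_conv_nth last_conv_nth)
  then have "(LEAST n. n < length e \<and> e ! n \<noteq> e ! ((n + length e - 1) mod length e)) = 0"
    "\<exists>n<length e. e ! n \<noteq> e ! ((n + length e - 1) mod length e)"
    using assms(1) by (auto intro: Least_eq_0)
  then show ?thesis
    unfolding CS_signs_def by simp
qed

lemma u_word_exponents:
  assumes qs: "quotient_of s = (q, p)" and "0 < q" "q < p"
  shows "map snd (u_word s) =
    concat (map (\<lambda>t. replicate (nat (cs_term p q (int t))) (if even t then 1 else -1)) [0..<2 * nat q])"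
proof -
  define g where "g = (\<lambda>j::nat. if even (int j * q div p) then (1::int) else -1)"
  define N where "N = (\<lambda>t::nat. nat (ceil_div (int t * p) q))"
  have N: "int (N t) = ceil_div (int t * p) q" for t
    using ceil_div_nonneg[OF \<open>0 < q\<close>, of "int t * p"] assms(2,3) by (simp add: N_def)
  have N_diff: "N (Suc t) - N t = nat (cs_term p q (int t))" for t
    using N[of t] N[of "Suc t"] unfolding cs_term_def by (simp add: algebra_simps)
  have N_mono: "N t \<le> N (Suc t)" for t
    using cs_term_ge_1[OF assms(2,3), of "int t"] N[of t] N[of "Suc t"] unfolding cs_term_def
    by (simp add: algebra_simps)
  have block: "map g [N t..<N (Suc t)] = replicate (N (Suc t) - N t) (if even t then 1 else -1)" for t
  proof (rule nth_equalityI)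
    fix i assume i: "i < length (map g [N t..<N (Suc t)])"
    then have "int (N t + i) * q div p = int t"
      using N[of t] N[of "Suc t"] assms(2,3) by (intro div_eq_of_ceil_div_bounds) (auto simp: algebra_simps)
    then show "map g [N t..<N (Suc t)] ! i = replicate (N (Suc t) - N t) (if even t then 1 else -1) ! i"
      using i by (simp add: g_def)
  qed simp
  have prefix_blocks: "map g [0..<N K] =
      concat (map (\<lambda>t. replicate (N (Suc t) - N t) (if even t then 1 else -1)) [0..<K])" for K
  proof (induction K)
    case 0
    then show ?case by (simp add: N_def ceil_div_def)
  next
    case (Suc K)
    have "[0..<N (Suc K)] = [0..<N K] @ [N K..<N (Suc K)]"
      using N_mono[of K] by (metis le0 upt_add_eq_append le_add_diff_inverse)
    then show ?case
      using Suc block[of K] by simp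
  qed
  have "N (2 * nat q) = 2 * nat p"
    using ceil_div_mult[OF \<open>0 < q\<close>, of "2 * p"] assms(2,3) unfolding N_def by (simp add: algebra_simps)
  then have "map g [0..<2 * nat p] =
      concat (map (\<lambda>t. replicate (N (Suc t) - N t) (if even t then 1 else -1)) [0..<2 * nat q])"
    using prefix_blocks[of "2 * nat q"] by simp
  moreover have "map snd (u_word s) = map g [0..<2 * nat p]"
    unfolding u_word_def qs g_def by simp
  ultimately show ?thesis
    using N_diff by simp
qed

theorem CS_eq_cs_seg:
  assumes qs: "quotient_of s = (q, p)" and "0 < s" "s < 1"
  shows "CS s = cs_seg p q 0 (2 * nat q)"
proof -
  have "p > 0" "s = of_int q / of_int p"
    using quotient_of_denom_pos[OF qs] quotient_of_div[OF qs] by simp_all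
  then have "0 < q" "q < p"
    using assms(2,3) by (simp_all add: zero_less_divide_iff divide_less_eq)
  define e where "e = map snd (u_word s)"
  have e: "e = concat (map (\<lambda>t. replicate (nat (cs_term p q (int t))) (if even t then 1 else -1))
      [0..<2 * nat q])"
    unfolding e_def by (rule u_word_exponents[OF qs \<open>0 < q\<close> \<open>q < p\<close>])
  have pos: "0 < cs_term p q t" for t
    using cs_term_ge_1[OF \<open>0 < q\<close> \<open>q < p\<close>, of t] by linarith
  have runs_e: "runs e = cs_seg p q 0 (2 * nat q)"
    unfolding e cs_seg_def using pos by (subst runs_concat_replicate) auto
  have "[0..<2 * nat q] = 0 # [1..<2 * nat q - 1] @ [2 * nat q - 1]"
    using \<open>0 < q\<close> by (simp add: upt_conv_Cons upt_Suc_append[symmetric])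
  then have "e \<noteq> [] \<and> hd e = 1 \<and> last e = -1"
    unfolding e using pos[of 0] pos[of "int (2 * nat q - 1)"] \<open>0 < q\<close>
    by (auto simp: hd_append last_append)
  then show ?thesis
    unfolding CS_def CS_word_def e_def[symmetric] using CS_signs_eq_runs runs_e by simp
qed

lemma occurrence_at_mod:
  assumes "q > 0" "length W \<le> 2 * nat q" "W = cs_seg p q a (length W)"
  shows "nat (a mod (2 * q)) \<in> {k. k < length (cs_seg p q 0 (2 * nat q)) \<and>
    prefix W (rotate k (cs_seg p q 0 (2 * nat q)))}"
proof -
  have "int (nat (a mod (2 * q))) = a mod (2 * q)" "nat (a mod (2 * q)) < 2 * nat q"
    using assms(1) by (simp_all add: nat_less_iff)
  then show ?thesis
    using assms prefix_rotate_cs_seg_iff[OF assms(1,2)] cs_seg_mod[OF assms(1)] by simp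
qed

lemma three_occurrences:
  assumes "q > 0" "length W \<le> 2 * nat q" "a < b" "b < d" "d < a + 2 * q"
    and "W = cs_seg p q a (length W)" "W = cs_seg p q b (length W)" "W = cs_seg p q d (length W)"
  shows "cyc_occ (cs_seg p q 0 (2 * nat q)) W \<ge> 3"
proof -
  have distinct: "nat (x mod (2 * q)) \<noteq> nat (y mod (2 * q))" if "x < y" "y < x + 2 * q" for x y
  proof
    assume "nat (x mod (2 * q)) = nat (y mod (2 * q))"
    then have "2 * q dvd y - x"
      using assms(1) by (simp add: mod_eq_dvd_iff[symmetric] eq_nat_nat_iff)
    then show False
      using that zdvd_imp_le[of "2 * q" "y - x"] by linarith
  qed
  let ?O = "{k. k < length (cs_seg p q 0 (2 * nat q)) \<and> prefix W (rotate k (cs_seg p q 0 (2 * nat q)))}"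
  have "{nat (a mod (2 * q)), nat (b mod (2 * q)), nat (d mod (2 * q))} \<subseteq> ?O"
    using occurrence_at_mod[OF assms(1,2) assms(6)] occurrence_at_mod[OF assms(1,2) assms(7)]
      occurrence_at_mod[OF assms(1,2) assms(8)] by simp
  then have "card {nat (a mod (2 * q)), nat (b mod (2 * q)), nat (d mod (2 * q))} \<le> card ?O"
    by (intro card_mono) simp_all
  moreover have "card {nat (a mod (2 * q)), nat (b mod (2 * q)), nat (d mod (2 * q))} = 3"
    using distinct[of a b] distinct[of b d] distinct[of a d] assms(3-5) by simp
  ultimately show ?thesis
    unfolding cyc_occ_def by simp
qed

lemma decomposition_offsets:
  fixes Q u n L1 L2 :: int
  assumes "0 < u" "u < Q" "0 < L1" "0 < L2" "L1 + L2 = Q" "\<not> Q dvd n + L1"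
    and "\<exists>l\<in>{0..L1}. Q dvd n + l" "\<exists>l\<in>{0..L2}. Q dvd n + L1 + l"
    and "\<exists>l\<in>{0..L1}. Q dvd n + l - u" "\<exists>l\<in>{0..L2}. Q dvd n + L1 + l - u"
  shows "Q dvd n" and "L1 = u"
proof -
  have zero_or_Q: "x = 0 \<or> x = Q" if "Q dvd x" "0 \<le> x" "x \<le> Q" for x
    using that dvd_imp_le_int[of x Q] by fastforce
  obtain la la' where la: "la \<in> {0..L1}" "Q dvd n + la" and la': "la' \<in> {0..L2}" "Q dvd n + L1 + la'"
    using assms(7,8) by blast
  have "Q dvd (n + L1 + la') - (n + la)"
    using la'(2) la(2) by (rule dvd_diff)
  then have "L1 + la' - la = 0 \<or> L1 + la' - la = Q"
    using la(1) la'(1) assms(5) by (intro zero_or_Q) (auto simp: algebra_simps)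
  then have "la = 0"
    using la la' assms(5,6) by auto
  then show "Q dvd n"
    using la(2) by simp
  obtain lb lb' where lb: "lb \<in> {0..L1}" "Q dvd n + lb - u" and lb': "lb' \<in> {0..L2}" "Q dvd n + L1 + lb' - u"
    using assms(9,10) by blast
  have "Q dvd (n + L1 + lb' - u) - (n + lb - u)"
    using lb'(2) lb(2) by (rule dvd_diff)
  then have "L1 + lb' - lb = 0 \<or> L1 + lb' - lb = Q"
    using lb(1) lb'(1) assms(5) by (intro zero_or_Q) (auto simp: algebra_simps)
  moreover have "\<not> Q dvd u"
    using assms(1,2) zdvd_imp_le[of Q u] by linarith
  ultimately have "lb = L1"
    using lb lb' assms(5) \<open>Q dvd n\<close> dvd_diff[of Q n "n - u"] by auto
  moreover have "L1 - u = (n + L1 - u) - n"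
    by simp
  ultimately have "Q dvd L1 - u"
    using lb(2) \<open>Q dvd n\<close> by (metis dvd_diff)
  then show "L1 = u"
    using assms(1-5) dvd_imp_le_int[of "L1 - u" Q] by fastforce
qed

section \<open>Continued fractions\<close>

fun cf_tail :: "nat list \<Rightarrow> rat \<Rightarrow> rat" where
  "cf_tail [] y = y"
| "cf_tail (m # ms) y = 1 / (of_nat m + cf_tail ms y)"

lemma cf_append: "cf (xs @ ys) = cf_tail xs (cf ys)"
  by (induction xs) auto

lemma cf_bounds:
  assumes "ms \<noteq> []" "\<forall>x\<in>set ms. x > 0" "last ms \<ge> 2"
  shows "0 < cf ms \<and> cf ms < 1"
  using assms
proof (induction ms)
  case Nil
  then show ?case by simp
next
  case (Cons m ms)
  show ?case
  proof (cases "ms = []")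
    case True
    then show ?thesis
      using Cons.prems by (simp add: divide_less_eq)
  next
    case False
    then have "0 < cf ms" "m \<ge> 1"
      using Cons by auto
    then show ?thesis
      by (simp add: divide_less_eq)
  qed
qed

lemma cf_tail_moebius:
  assumes "\<forall>x\<in>set xs. x > 0"
  shows "\<exists>a b c d :: int. 0 \<le> a \<and> 0 \<le> b \<and> 0 \<le> c \<and> 1 \<le> d \<and> a * d - b * c = (-1) ^ length xs \<and>
    (xs \<noteq> [] \<longrightarrow> 1 \<le> b) \<and>
    (\<forall>y \<ge> 0. cf_tail xs y = (of_int a * y + of_int b) / (of_int c * y + of_int d))"
  using assms
proof (induction xs)
  case Nil
  show ?case
    by (intro exI[of _ 1] exI[of _ 0] exI[of _ 0] exI[of _ 1]) simp
next
  case (Cons m xs)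
  then obtain a b c d :: int where abcd: "0 \<le> a" "0 \<le> b" "0 \<le> c" "1 \<le> d" "a * d - b * c = (-1) ^ length xs"
    and tail: "\<forall>y \<ge> 0. cf_tail xs y = (of_int a * y + of_int b) / (of_int c * y + of_int d)"
    by auto
  have m: "int m \<ge> 1"
    using Cons.prems by auto
  have "cf_tail (m # xs) y = (of_int c * y + of_int d) / (of_int (int m * c + a) * y + of_int (int m * d + b))"
    if "y \<ge> 0" for y
  proof -
    have "0 < of_int c * y + of_int d" "0 \<le> of_int a * y + of_int b"
      using abcd that by (simp_all add: add_nonneg_pos add_nonneg_nonneg)
    then show ?thesis
      using tail that by (simp add: field_simps)
  qed
  moreover have "1 \<le> int m * d + b"
    using m abcd(2,4) mult_mono[of 1 "int m" 1 d] by simp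
  moreover have "c * (int m * d + b) - d * (int m * c + a) = (-1) ^ length (m # xs)"
    using abcd(5) by (simp add: algebra_simps)
  ultimately show ?case
    using abcd(1-4) m by (intro exI[of _ c] exI[of _ d] exI[of _ "int m * c + a"] exI[of _ "int m * d + b"]) simp
qed

text \<open>\<open>b/d\<close> is the previous convergent \<open>cf xs\<close>.\<close>

lemma cf_snoc_fractions:
  assumes "xs \<noteq> []" "\<forall>x\<in>set xs. x > 0" "z \<ge> 2"
  obtains Q P b d :: int where
    "cf (xs @ [z]) = of_int Q / of_int P" "cf (xs @ [z - 1]) = of_int (Q - b) / of_int (P - d)"
    "cf (xs @ [z - 1, 2]) = of_int (2 * Q - b) / of_int (2 * P - d)"
    "b * P - d * Q = - ((-1) ^ length xs)" "1 \<le> b" "2 * b \<le> Q" "0 < P"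
proof -
  obtain a b c d :: int where abcd: "0 \<le> a" "0 \<le> b" "0 \<le> c" "1 \<le> d" "a * d - b * c = (-1) ^ length xs"
    "1 \<le> b" and tail: "\<forall>y \<ge> 0. cf_tail xs y = (of_int a * y + of_int b) / (of_int c * y + of_int d)"
    using cf_tail_moebius[OF assms(2)] assms(1) by blast
  have inverse_tail: "cf (xs @ ys) = (of_int a + of_int b * w) / (of_int c + of_int d * w)"
    if "cf ys = 1 / w" "w > 0" for ys w
  proof -
    have "cf (xs @ ys) = (of_int a * (1 / w) + of_int b) / (of_int c * (1 / w) + of_int d)"
      using tail that by (simp add: cf_append)
    also have "\<dots> = (of_int a + of_int b * w) / (of_int c + of_int d * w)"
    proof -
      have "of_int a * (1 / w) + of_int b = (of_int a + of_int b * w) / w"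
        "of_int c * (1 / w) + of_int d = (of_int c + of_int d * w) / w"
        using that(2) by (simp_all add: field_simps)
      then show ?thesis
        using that(2) by simp
    qed
    finally show ?thesis .
  qed
  define Q P where "Q = a + b * int z" and "P = c + d * int z"
  have "cf (xs @ [z]) = of_int Q / of_int P"
    using inverse_tail[of "[z]" "of_nat z"] assms(3) unfolding Q_def P_def by simp
  moreover have "cf (xs @ [z - 1]) = of_int (Q - b) / of_int (P - d)"
    using inverse_tail[of "[z - 1]" "of_nat z - 1"] assms(3) unfolding Q_def P_def
    by (simp add: of_nat_diff algebra_simps)
  moreover have "cf (xs @ [z - 1, 2]) = of_int (2 * Q - b) / of_int (2 * P - d)"
  proof -
    have "cf [z - 1, 2] = 1 / (of_nat z - 1 / 2)"
      using assms(3) by (simp add: of_nat_diff field_simps)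
    then have "cf (xs @ [z - 1, 2])
        = (of_int a + of_int b * (of_nat z - 1 / 2)) / (of_int c + of_int d * (of_nat z - 1 / 2))"
      using inverse_tail assms(3) by simp
    also have "of_int a + of_int b * (of_nat z - 1 / 2) = (of_int (2 * Q - b) / 2 :: rat)"
      unfolding Q_def by (simp add: field_simps)
    also have "of_int c + of_int d * (of_nat z - 1 / 2) = (of_int (2 * P - d) / 2 :: rat)"
      unfolding P_def by (simp add: field_simps)
    also have "(of_int (2 * Q - b) / 2) / (of_int (2 * P - d) / 2) = (of_int (2 * Q - b) / of_int (2 * P - d) :: rat)"
      by (metis divide_divide_times_eq mult.commute mult_divide_mult_cancel_left zero_neq_numeral)
    finally show ?thesis .
  qed
  moreover have "b * P - d * Q = - ((-1) ^ length xs)"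
    using abcd(5) unfolding Q_def P_def by (simp add: algebra_simps)
  moreover have "b * 2 \<le> b * int z" "1 * 2 \<le> d * int z"
    using abcd(2,4) assms(3) by (intro mult_left_mono mult_mono; simp)+
  then have "2 * b \<le> Q" "0 < P"
    using abcd(1,3) unfolding Q_def P_def by simp_all
  ultimately show ?thesis
    using that abcd(6) by blast
qed

lemma coprime_of_bezout: "x * Q + y * P = (1 :: int) \<Longrightarrow> coprime Q P"
  by (metis add_minus_cancel coprime_add_one_left coprime_commute coprime_mult_right_iff mult.commute
    mult_minus_right)

lemma quotient_of_of_int_divide:
  assumes "P > 0" "coprime Q P"
  shows "quotient_of (of_int Q / of_int P) = (Q, P)"
  using assms by (simp add: Fract_of_int_quotient[symmetric] quotient_of_Fract)

lemma cf_first_quotient_bounds: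
  assumes "length ms \<ge> 2" "\<forall>x\<in>set ms. x > 0" "last ms \<ge> 2"
    and "cf ms = of_int Q / of_int P" "Q > 0" "P > 0"
  shows "int (hd ms) * Q < P" "P < (int (hd ms) + 1) * Q"
proof -
  obtain m ys where ms: "ms = m # ys"
    using assms(1) by (cases ms) auto
  then have "ys \<noteq> []"
    using assms(1) by auto
  then have tail: "0 < cf ys" "cf ys < 1"
    using cf_bounds[of ys] assms(2,3) ms by auto
  then have "of_int P = (of_nat m + cf ys) * of_int Q"
    using assms(4-6) ms by (simp add: field_simps)
  then have "of_nat m * of_int Q < (of_int P :: rat)" "of_int P < (of_nat m + 1) * (of_int Q :: rat)"
    using tail assms(5) by (simp_all add: algebra_simps)
  then have "rat_of_int (int m * Q) < rat_of_int P" "rat_of_int P < rat_of_int ((int m + 1) * Q)"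
    by simp_all
  then show "int (hd ms) * Q < P" "P < (int (hd ms) + 1) * Q"
    unfolding ms of_int_less_iff by simp_all
qed

lemma of_int_frac_less_iff:
  assumes "b > 0" "d > 0"
  shows "(of_int a / of_int b :: rat) < of_int c / of_int d \<longleftrightarrow> a * d < c * b"
proof -
  have "(of_int a / of_int b :: rat) < of_int c / of_int d \<longleftrightarrow> of_int a * of_int d < (of_int c * of_int b :: rat)"
    using assms by (simp add: field_simps)
  also have "\<dots> \<longleftrightarrow> a * d < c * b"
    by (metis of_int_less_iff of_int_mult)
  finally show ?thesis .
qed

lemma of_int_frac_le_iff:
  assumes "b > 0" "d > 0"
  shows "(of_int a / of_int b :: rat) \<le> of_int c / of_int d \<longleftrightarrow> a * d \<le> c * b"
  using of_int_frac_less_iff[OF assms(2,1), of c a] by (simp add: not_less[symmetric])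

section \<open>\<open>CS(r)\<close> and \<open>CS(s)\<close> for \<open>s\<close> near \<open>r = Q/P\<close>\<close>

locale farey_neighbours =
  fixes Q P u v :: int
  assumes Q_pos: "0 < Q" and Q_less_P: "Q < P" and u_pos: "0 < u" and u_less_Q: "u < Q"
    and det: "u * P = 1 + v * Q"
begin

abbreviation CS_r :: "nat list" where
  "CS_r \<equiv> cs_seg P Q 0 (2 * nat Q)"

lemma coprime_Q_P: "coprime Q P"
  using det by (intro coprime_of_bezout[of "- v" _ u]) (simp add: algebra_simps)

lemma ceil_div_shift:
  assumes "\<not> Q dvd t"
  shows "ceil_div ((t + u) * P) Q = ceil_div (t * P) Q + v"
proof -
  have "(t + u) * P = (t * P + 1) + v * Q"
    using det by (simp add: algebra_simps)
  moreover have "\<not> Q dvd t * P"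
    using assms coprime_dvd_mult_left_iff[OF coprime_Q_P] by simp
  ultimately show ?thesis
    using ceil_div_add_mult[OF Q_pos] ceil_div_succ[OF Q_pos] by simp
qed

lemma cs_term_shift:
  assumes "\<not> Q dvd t" "\<not> Q dvd t + 1"
  shows "cs_term P Q (t + u) = cs_term P Q t"
  using ceil_div_shift[OF assms(1)] ceil_div_shift[OF assms(2)]
  unfolding cs_term_def by (simp add: algebra_simps)

lemma cs_seg_shift:
  assumes "\<forall>l\<in>{0..int n}. \<not> Q dvd a + l"
  shows "cs_seg P Q (a + u) n = cs_seg P Q a n"
proof (rule nth_equalityI)
  fix l assume l: "l < length (cs_seg P Q (a + u) n)"
  then have "\<not> Q dvd (a + int l)" "\<not> Q dvd (a + int l) + 1"
    using assms by (auto simp: add.assoc)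
  then have "cs_term P Q (a + int l + u) = cs_term P Q (a + int l)"
    by (rule cs_term_shift)
  then show "cs_seg P Q (a + u) n ! l = cs_seg P Q a n ! l"
    using l by (simp add: ac_simps)
qed simp

lemma occurrence_meets_multiple:
  assumes "cyc_occ CS_r W = 2" "length W \<le> nat Q" "W = cs_seg P Q a (length W)"
  shows "\<exists>l\<in>{0..int (length W)}. Q dvd a + l" and "\<exists>l\<in>{0..int (length W)}. Q dvd a + l - u"
proof -
  have len: "length W \<le> 2 * nat Q"
    using assms(2) by simp
  have at_a_plus_Q: "W = cs_seg P Q (a + 1 * Q) (length W)"
    using assms(3) cs_seg_periodic[OF Q_pos] by metis
  show "\<exists>l\<in>{0..int (length W)}. Q dvd a + l"
  proof (rule ccontr)
    assume "\<not> ?thesis"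
    then have "W = cs_seg P Q (a + u) (length W)"
      using assms(3) cs_seg_shift by auto
    then have "cyc_occ CS_r W \<ge> 3"
      using three_occurrences[OF Q_pos len, of a "a + u" "a + 1 * Q"] assms(3) at_a_plus_Q u_pos u_less_Q
      by auto
    then show False
      using assms(1) by simp
  qed
  show "\<exists>l\<in>{0..int (length W)}. Q dvd a + l - u"
  proof (rule ccontr)
    assume "\<not> ?thesis"
    then have "cs_seg P Q (a - u + u) (length W) = cs_seg P Q (a - u) (length W)"
      by (intro cs_seg_shift) (auto simp: algebra_simps)
    then have "W = cs_seg P Q (a - u) (length W)"
      using assms(3) by simp
    then have "cyc_occ CS_r W \<ge> 3"
      using three_occurrences[OF Q_pos len, of "a - u" a "a + 1 * Q"] assms(3) at_a_plus_Q u_pos u_less_Q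
      by auto
    then show False
      using assms(1) by simp
  qed
qed

lemma CS_decomp_determined:
  assumes "CS_decomp CS_r m S1 S2" "m \<noteq> nat (cs_term P Q 0)"
  shows "S1 = cs_seg P Q 0 (nat u)" and "S2 = cs_seg P Q u (nat (Q - u))"
proof -
  obtain n where rot: "rotate n CS_r = S1 @ S2 @ S1 @ S2"
    and occ: "cyc_occ CS_r S1 = 2" "cyc_occ CS_r S2 = 2" and ne: "S1 \<noteq> []" "S2 \<noteq> []"
    and hd: "hd S2 = m"
    using assms(1) unfolding CS_decomp_def by blast
  define L1 L2 where "L1 = length S1" and "L2 = length S2"
  have seg: "cs_seg P Q (int n) (2 * nat Q) = S1 @ S2 @ S1 @ S2"
    using rot rotate_cs_seg[OF Q_pos] by simp
  have L: "L1 + L2 = nat Q"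
    unfolding L1_def L2_def using arg_cong[OF seg, of length] by simp
  have "cs_seg P Q (int n) L1 @ cs_seg P Q (int n + int L1) L2 = S1 @ S2"
    using arg_cong[OF seg, of "take (L1 + L2)"] L unfolding L1_def L2_def
    by (simp add: take_cs_seg cs_seg_append[symmetric])
  then have S1: "S1 = cs_seg P Q (int n) L1" and S2: "S2 = cs_seg P Q (int n + int L1) L2"
    unfolding L1_def L2_def by simp_all
  have L2_pos: "0 < L2"
    using ne(2) unfolding L2_def by simp
  have "\<not> Q dvd int n + int L1"
  proof
    assume "Q dvd int n + int L1"
    then have "S2 = cs_seg P Q 0 L2"
      using S2 cs_seg_add_multiple[OF Q_pos, of "int n + int L1" P 0 L2] by simp
    then have "hd S2 = nat (cs_term P Q 0)"
      using L2_pos by (simp add: hd_conv_nth)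
    then show False
      using hd assms(2) by simp
  qed
  moreover have "\<exists>l\<in>{0..int L1}. Q dvd int n + l" "\<exists>l\<in>{0..int L1}. Q dvd int n + l - u"
    using occurrence_meets_multiple[OF occ(1), of "int n"] S1 L unfolding L1_def by auto
  moreover have "\<exists>l\<in>{0..int L2}. Q dvd int n + int L1 + l"
    "\<exists>l\<in>{0..int L2}. Q dvd int n + int L1 + l - u"
    using occurrence_meets_multiple[OF occ(2), of "int n + int L1"] S2 L unfolding L2_def by auto
  moreover have "0 < int L1" "0 < int L2" "int L1 + int L2 = Q"
    using ne L Q_pos unfolding L1_def L2_def by simp_all
  ultimately have "Q dvd int n" "int L1 = u"
    using decomposition_offsets[OF u_pos u_less_Q, of "int L1" "int L2" "int n"] by blast+
  have "L1 = nat u" "L2 = nat (Q - u)"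
    using \<open>int L1 = u\<close> L by linarith+
  then show "S1 = cs_seg P Q 0 (nat u)" and "S2 = cs_seg P Q u (nat (Q - u))"
    using S1 S2 u_pos cs_seg_add_multiple[OF Q_pos \<open>Q dvd int n\<close>, of P 0]
      cs_seg_add_multiple[OF Q_pos \<open>Q dvd int n\<close>, of P u] by (simp_all add: add.commute)
qed

text \<open>\<open>\<lceil>tp/q\<rceil>\<close> is the sum of the first \<open>t\<close> terms of \<open>CS(q/p)\<close>, so \<open>discrepancy p q\<close> compares
  the partial sums of \<open>CS(s)\<close> with those of \<open>CS(r)\<close>.\<close>

definition discrepancy :: "int \<Rightarrow> int \<Rightarrow> int \<Rightarrow> int" where
  "discrepancy p q t = ceil_div (t * p) q - ceil_div (t * P) Q"

definition gap :: "int \<Rightarrow> int" where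
  "gap t = ceil_div (t * P) Q * Q - t * P"

lemma cs_term_eq_discrepancy:
  "cs_term p q t = cs_term P Q t + discrepancy p q (t + 1) - discrepancy p q t"
  unfolding discrepancy_def cs_term_def by (simp add: algebra_simps)

lemma gap_bounds: "0 \<le> gap t" "gap t < Q"
  using ceil_div_bounds[OF Q_pos, of "t * P"] unfolding gap_def by (simp_all add: algebra_simps)

lemma gap_dvd: "Q dvd t + gap t * u"
proof -
  have "t + gap t * u = ceil_div (t * P) Q * Q * u + t - t * (u * P)"
    unfolding gap_def by (simp add: algebra_simps)
  also have "\<dots> = Q * (ceil_div (t * P) Q * u - t * v)"
    using det by (simp add: algebra_simps)
  finally have "t + gap t * u = Q * (ceil_div (t * P) Q * u - t * v)" .
  then show ?thesis
    by simp
qed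

lemma gap_multiple: "gap (k * Q) = 0"
  unfolding gap_def using ceil_div_mult[OF Q_pos, of "k * P"] by (simp add: ac_simps)

lemma gap_multiple_add_u: "gap (k * Q + u) = Q - 1"
proof -
  have "(k * Q + u) * P = 1 + (k * P + v) * Q"
    using det by (simp add: algebra_simps)
  moreover have "ceil_div 1 Q = 1"
    using Q_pos by (intro ceil_div_unique) auto
  ultimately show ?thesis
    unfolding gap_def using ceil_div_add_mult[OF Q_pos, of 1 "k * P + v"] det by (simp add: algebra_simps)
qed

lemma discrepancy_eqI:
  assumes "q > 0" "p * Q = q * P + e" "gap t = g"
    and "(d - 1) * q * Q < t * e - q * g" "t * e - q * g \<le> d * q * Q"
  shows "discrepancy p q t = d"
proof -
  have "t * p * Q = t * (q * P + e)"
    using assms(2) by (simp add: mult.assoc)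
  then have "t * p * Q = (t * e - q * gap t) + ceil_div (t * P) Q * (q * Q)"
    unfolding gap_def by (simp add: algebra_simps)
  then have "ceil_div (t * p) q = ceil_div (t * e - q * gap t) (q * Q) + ceil_div (t * P) Q"
    using ceil_div_mult_mult[OF Q_pos, of "t * p" q] ceil_div_add_mult[of "q * Q"] assms(1) Q_pos
    by simp
  moreover have "ceil_div (t * e - q * gap t) (q * Q) = d"
    using assms(1,3-5) Q_pos by (intro ceil_div_unique) (auto simp: algebra_simps)
  ultimately show ?thesis
    unfolding discrepancy_def by simp
qed

lemma gap_residue_below:
  shows "0 \<le> t \<Longrightarrow> t < Q \<Longrightarrow> t \<le> gap t * (Q - u)"
    and "u - 2 * Q < t \<Longrightarrow> t < 0 \<Longrightarrow> - t \<le> (Q - gap t) * (Q - u)"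
proof -
  obtain n where n: "t + gap t * u = Q * n"
    using gap_dvd by (metis dvd_def)
  show "t \<le> gap t * (Q - u)" if "0 \<le> t" "t < Q"
  proof -
    have "gap t * u \<le> gap t * Q"
      using gap_bounds u_less_Q by (intro mult_left_mono) auto
    then have "Q * n < Q * (1 + gap t)"
      using n that by (simp add: algebra_simps)
    then have "n \<le> gap t"
      using Q_pos by (simp add: mult_less_cancel_left_pos)
    then have "Q * n \<le> Q * gap t"
      using Q_pos by simp
    then show ?thesis
      using n by (simp add: algebra_simps)
  qed
  show "- t \<le> (Q - gap t) * (Q - u)" if "u - 2 * Q < t" "t < 0"
  proof -
    define k where "k = Q - gap t"
    have k: "1 \<le> k"
      using gap_bounds(2)[of t] unfolding k_def by simp
    have e: "Q * (u - n) = - t + k * u"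
      using n unfolding k_def by (simp add: algebra_simps)
    have "(k - 1) * u \<le> (k - 1) * Q"
      using k u_less_Q by (intro mult_left_mono) auto
    then have "Q * (u - n) < Q * (k + 1)"
      using e that by (simp add: algebra_simps)
    then have "u - n \<le> k"
      using Q_pos by (simp add: mult_less_cancel_left_pos)
    then have "Q * (u - n) \<le> Q * k"
      using Q_pos by simp
    then show ?thesis
      using e unfolding k_def by (simp add: algebra_simps)
  qed
qed

lemma gap_residue_above:
  shows "- Q < t \<Longrightarrow> t < 0 \<Longrightarrow> - t \<le> gap t * u"
    and "0 \<le> t \<Longrightarrow> t < Q + u \<Longrightarrow> t \<le> (Q - gap t) * u"
proof -
  obtain n where n: "t + gap t * u = Q * n"
    using gap_dvd by (metis dvd_def)
  show "- t \<le> gap t * u" if "- Q < t" "t < 0"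
  proof -
    have "0 \<le> gap t * u"
      using gap_bounds u_pos by simp
    then have "Q * (- 1) < Q * n"
      using n that by linarith
    then have "0 \<le> n"
      using Q_pos by (simp only: mult_less_cancel_left_pos)
    then have "0 \<le> Q * n"
      using Q_pos by simp
    then show ?thesis
      using n by linarith
  qed
  show "t \<le> (Q - gap t) * u" if "0 \<le> t" "t < Q + u"
  proof -
    define k where "k = Q - gap t"
    have "1 * u \<le> k * u"
      using gap_bounds(2)[of t] u_pos unfolding k_def by (intro mult_right_mono) auto
    moreover have e: "Q * (n - u) = t - k * u"
      using n unfolding k_def by (simp add: algebra_simps)
    ultimately have "Q * (n - u) < Q * 1"
      using that by simp
    then have "n - u \<le> 0"
      using Q_pos by (simp add: mult_less_cancel_left_pos)
    then have "Q * (n - u) \<le> 0"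
      using Q_pos by (simp add: mult_nonneg_nonpos)
    then show ?thesis
      using e unfolding k_def by simp
  qed
qed

lemma discrepancy_below:
  assumes q: "q > 0" and pe: "p * Q = q * P + i" and i: "i > 0"
    and bounds: "(Q - u) * i < q" "q \<le> (2 * Q - u) * i" "i \<le> q"
  shows "\<And>t. u - 2 * Q < t \<Longrightarrow> t < Q \<Longrightarrow> discrepancy p q t = 0"
    and "discrepancy p q (u - 2 * Q) = -1" and "discrepancy p q Q = 1"
proof -
  fix t assume t: "u - 2 * Q < t" "t < Q"
  have "t * i \<le> q * gap t \<and> - (t * i) < q * (Q - gap t)"
  proof (cases "t \<ge> 0")
    case True
    have "t * i \<le> gap t * (Q - u) * i"
      using gap_residue_below(1)[OF True t(2)] i by (intro mult_right_mono) auto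
    also have "\<dots> \<le> gap t * q"
      using bounds(1) gap_bounds(1)[of t] by (simp add: mult.assoc mult_left_mono)
    finally have "t * i \<le> q * gap t"
      by (simp add: mult.commute)
    moreover have "0 \<le> t * i" "0 < q * (Q - gap t)"
      using True i q gap_bounds(2)[of t] by simp_all
    ultimately show ?thesis
      by linarith
  next
    case False
    have "- (t * i) = (- t) * i"
      by simp
    also have "\<dots> \<le> (Q - gap t) * (Q - u) * i"
      using gap_residue_below(2)[OF t(1)] False i by (intro mult_right_mono) auto
    also have "\<dots> < (Q - gap t) * q"
      using bounds(1) gap_bounds(2)[of t] by (simp add: mult.assoc)
    finally have "- (t * i) < q * (Q - gap t)"
      by (simp add: mult.commute)
    moreover have "t * i \<le> 0" "0 \<le> q * gap t"
      using False i q gap_bounds(1)[of t] by (simp_all add: mult_nonpos_nonneg)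
    ultimately show ?thesis
      by linarith
  qed
  then show "discrepancy p q t = 0"
    by (intro discrepancy_eqI[OF q pe refl]) (auto simp: algebra_simps)
next
  have g: "gap (u - 2 * Q) = Q - 1"
    using gap_multiple_add_u[of "- 2"] by (simp add: algebra_simps)
  have "Q * i \<le> Q * q"
    using bounds(3) Q_pos by simp
  then show "discrepancy p q (u - 2 * Q) = -1"
    using bounds(1,2) by (intro discrepancy_eqI[OF q pe g]) (auto simp: algebra_simps)
next
  have g: "gap Q = 0"
    using gap_multiple[of 1] by simp
  have "Q * i \<le> Q * q"
    using bounds(3) Q_pos by simp
  then show "discrepancy p q Q = 1"
    using Q_pos i by (intro discrepancy_eqI[OF q pe g]) (auto simp: algebra_simps)
qed

lemma discrepancy_above:
  assumes q: "q > 0" and pe: "p * Q = q * P - i" and i: "i > 0"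
    and bounds: "u * i < q" "q \<le> (Q + u) * i" "i \<le> q"
  shows "\<And>t. - Q < t \<Longrightarrow> t < Q + u \<Longrightarrow> discrepancy p q t = 0"
    and "discrepancy p q (- Q) = 1" and "discrepancy p q (Q + u) = -1"
proof -
  fix t assume t: "- Q < t" "t < Q + u"
  have "- (t * i) \<le> q * gap t \<and> t * i < q * (Q - gap t)"
  proof (cases "t \<ge> 0")
    case False
    have "- (t * i) = (- t) * i"
      by simp
    also have "\<dots> \<le> gap t * u * i"
      using gap_residue_above(1)[OF t(1)] False i by (intro mult_right_mono) auto
    also have "\<dots> \<le> gap t * q"
      using bounds(1) gap_bounds(1)[of t] by (simp add: mult.assoc mult_left_mono)
    finally have "- (t * i) \<le> q * gap t"
      by (simp add: mult.commute)
    moreover have "t * i \<le> 0" "0 < q * (Q - gap t)"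
      using False i q gap_bounds(2)[of t] by (simp_all add: mult_nonpos_nonneg)
    ultimately show ?thesis
      by linarith
  next
    case True
    have "t * i \<le> (Q - gap t) * u * i"
      using gap_residue_above(2)[OF True t(2)] i by (intro mult_right_mono) auto
    also have "\<dots> < (Q - gap t) * q"
      using bounds(1) gap_bounds(2)[of t] by (simp add: mult.assoc)
    finally have "t * i < q * (Q - gap t)"
      by (simp add: mult.commute)
    moreover have "0 \<le> t * i" "0 \<le> q * gap t"
      using True i q gap_bounds(1)[of t] by simp_all
    ultimately show ?thesis
      by linarith
  qed
  then show "discrepancy p q t = 0"
    by (intro discrepancy_eqI[OF q pe[unfolded diff_conv_add_uminus] refl]) (auto simp: algebra_simps)
next
  have g: "gap (- Q) = 0"
    using gap_multiple[of "- 1"] by simp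
  have "Q * i \<le> Q * q"
    using bounds(3) Q_pos by simp
  then show "discrepancy p q (- Q) = 1"
    using Q_pos i by (intro discrepancy_eqI[OF q pe[unfolded diff_conv_add_uminus] g]) (auto simp: algebra_simps)
next
  have g: "gap (Q + u) = Q - 1"
    using gap_multiple_add_u[of 1] by simp
  have "Q * i \<le> Q * q"
    using bounds(3) Q_pos by simp
  then show "discrepancy p q (Q + u) = -1"
    using bounds(1,2) by (intro discrepancy_eqI[OF q pe[unfolded diff_conv_add_uminus] g]) (auto simp: algebra_simps)
qed

lemma cs_seg_window:
  assumes zero: "\<And>t. a < t \<Longrightarrow> t < a + int n \<Longrightarrow> discrepancy p q t = 0"
    and ends: "discrepancy p q a = - d" "discrepancy p q (a + int n) = d"
    and seg: "cs_seg P Q a n = x # X @ [y]"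
  shows "cs_seg p q a n = nat (int x + d) # X @ [nat (int y + d)]"
proof (rule nth_equalityI)
  have n: "n = length X + 2"
    using arg_cong[OF seg, of length] by simp
  then show "length (cs_seg p q a n) = length (nat (int x + d) # X @ [nat (int y + d)])"
    by simp
  fix l assume "l < length (cs_seg p q a n)"
  then have l: "l < n"
    by simp
  have seg_l: "(x # X @ [y]) ! l = nat (cs_term P Q (a + int l))"
    using seg l by (metis nth_cs_seg)
  have term_l: "cs_term p q (a + int l)
      = cs_term P Q (a + int l) + discrepancy p q (a + int l + 1) - discrepancy p q (a + int l)"
    by (rule cs_term_eq_discrepancy)
  have int_l: "int (nat (cs_term P Q (a + int l))) = cs_term P Q (a + int l)"
    using cs_term_ge_1[OF Q_pos Q_less_P, of "a + int l"] by simp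
  consider "l = 0" | "l = Suc (length X)" | "0 < l" "l \<le> length X"
    using l n by linarith
  then show "cs_seg p q a n ! l = (nat (int x + d) # X @ [nat (int y + d)]) ! l"
  proof cases
    case 1
    then have "cs_term p q (a + int l) = cs_term P Q (a + int l) + d"
      using term_l zero[of "a + 1"] ends(1) n by simp
    then show ?thesis
      using seg_l int_l l 1 by simp
  next
    case 2
    then have "discrepancy p q (a + int l + 1) = d" "discrepancy p q (a + int l) = 0"
      using n ends(2) zero[of "a + int l"] by (simp_all add: add.assoc)
    then have "cs_term p q (a + int l) = cs_term P Q (a + int l) + d"
      using term_l by simp
    then show ?thesis
      using seg_l int_l l n 2 by (simp add: nth_append)
  next
    case 3
    then show ?thesis
      using seg_l term_l zero[of "a + int l"] zero[of "a + int l + 1"] l n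
      by (auto simp: nth_append nth_Cons')
  qed
qed

lemma cs_seg_add_period: "cs_seg P Q a (nat Q + n) = cs_seg P Q a (nat Q) @ cs_seg P Q a n"
  using cs_seg_append[of P Q a "nat Q" n] cs_seg_add_multiple[OF Q_pos, of Q P a n] Q_pos by simp

lemma cs_seg_period_from_0: "cs_seg P Q 0 (nat Q) = cs_seg P Q 0 (nat u) @ cs_seg P Q u (nat (Q - u))"
  using cs_seg_append[of P Q 0 "nat u" "nat (Q - u)"] u_pos u_less_Q by (simp add: nat_add_distrib[symmetric])

lemma cs_seg_period_from_u: "cs_seg P Q u (nat Q) = cs_seg P Q u (nat (Q - u)) @ cs_seg P Q 0 (nat u)"
  using cs_seg_append[of P Q u "nat (Q - u)" "nat u"] cs_seg_add_multiple[OF Q_pos, of Q P 0 "nat u"]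
    u_pos u_less_Q by (simp add: nat_add_distrib[symmetric])

lemma v_bounds: "0 < v" "v < P" "u \<le> v" "Q - u < P - v"
proof -
  have "1 * P \<le> u * P"
    using u_pos Q_pos Q_less_P by (intro mult_right_mono) auto
  then have "0 < v * Q"
    using det Q_pos Q_less_P by linarith
  then show "0 < v"
    using Q_pos by (simp add: zero_less_mult_iff)
  have "u * P < Q * P"
    using u_less_Q Q_pos Q_less_P by simp
  then have "v * Q < P * Q"
    using det by (simp add: mult.commute)
  then show "v < P"
    using Q_pos by simp
  have "u * (Q + 1) \<le> u * P"
    using u_pos Q_less_P by (intro mult_left_mono) auto
  then have "u * Q \<le> v * Q"
    using det u_pos by (simp add: algebra_simps)
  then show "u \<le> v"
    using Q_pos by simp
  have "(Q - u) * Q < (Q - u) * P"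
    using u_less_Q Q_less_P by simp
  moreover have "(P - v) * Q = (Q - u) * P + 1"
    using det by (simp add: algebra_simps)
  ultimately have "(Q - u) * Q < (P - v) * Q"
    by linarith
  then show "Q - u < P - v"
    using Q_pos by simp
qed

text \<open>The fractions in the two ranges of \<open>s\<close> are exactly the positive combinations, with the
  first coefficient dominating, of two Farey neighbours of \<open>Q/P\<close>; Cramer's rule gives the
  coefficients since the determinants are \<open>\<plusminus>1\<close>.\<close>

lemma below_coordinates:
  assumes "p > 0" "of_int (Q - u) / of_int (P - v) < (of_int q / of_int p :: rat)"
    "of_int q / of_int p \<le> (of_int (2 * Q - u) / of_int (2 * P - v) :: rat)"
  obtains i j where "0 < j" "j \<le> i" "q = i * (Q - u) + j * Q" "p = i * (P - v) + j * P"
proof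
  define i j where "i = Q * p - P * q" and "j = (P - v) * q - (Q - u) * p"
  have "P - v > 0" "2 * P - v > 0"
    using v_bounds Q_pos Q_less_P by simp_all
  then show "0 < j" "j \<le> i"
    using assms of_int_frac_less_iff[of "P - v" p "Q - u" q] of_int_frac_le_iff[of p "2 * P - v" q "2 * Q - u"]
    unfolding i_def j_def by (simp_all add: algebra_simps)
  have "i * (Q - u) + j * Q = q * (u * P - v * Q)" "i * (P - v) + j * P = p * (u * P - v * Q)"
    unfolding i_def j_def by (simp_all add: algebra_simps)
  then show "q = i * (Q - u) + j * Q" "p = i * (P - v) + j * P"
    using det by simp_all
qed

lemma above_coordinates:
  assumes "p > 0" "of_int (Q + u) / of_int (P + v) \<le> (of_int q / of_int p :: rat)"
    "of_int q / of_int p < (of_int u / of_int v :: rat)"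
  obtains i j where "0 < j" "j \<le> i" "q = i * u + j * Q" "p = i * v + j * P"
proof
  define i j where "i = P * q - Q * p" and "j = u * p - v * q"
  have "P + v > 0" "v > 0"
    using v_bounds Q_pos Q_less_P by simp_all
  then show "0 < j" "j \<le> i"
    using assms of_int_frac_less_iff[of p v q u] of_int_frac_le_iff[of "P + v" p "Q + u" q]
    unfolding i_def j_def by (simp_all add: algebra_simps)
  have "i * u + j * Q = q * (u * P - v * Q)" "i * v + j * P = p * (u * P - v * Q)"
    unfolding i_def j_def by (simp_all add: algebra_simps)
  then show "q = i * u + j * Q" "p = i * v + j * P"
    using det by simp_all
qed

lemma below_parameters:
  assumes "p > 0" "of_int (Q - u) / of_int (P - v) < (of_int q / of_int p :: rat)"
    "of_int q / of_int p \<le> (of_int (2 * Q - u) / of_int (2 * P - v) :: rat)"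
  obtains i where "0 < q" "q < p" "0 < i" "p * Q = q * P + i"
    "(Q - u) * i < q" "q \<le> (2 * Q - u) * i" "i \<le> q" "3 * Q - u \<le> 2 * q"
proof -
  obtain i j where ij: "0 < j" "j \<le> i" "q = i * (Q - u) + j * Q" "p = i * (P - v) + j * P"
    using below_coordinates assms by blast
  have "0 < j * Q" "0 \<le> i * (Q - u)" "i * (Q - u) < i * (P - v)" "j * Q < j * P"
    using ij(1,2) Q_pos Q_less_P u_less_Q v_bounds(4) by simp_all
  then have "0 < q" "q < p"
    using ij(3,4) by linarith+
  have "p * Q - q * P = i * (u * P - v * Q)"
    by (simp add: ij(3,4) algebra_simps)
  then have pe: "p * Q = q * P + i"
    using det by simp
  have mono: "Q - u \<le> i * (Q - u)" "Q \<le> j * Q" "j * Q \<le> i * Q" "i \<le> i * (Q - u)"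
    using mult_right_mono[of 1 i "Q - u"] mult_right_mono[of 1 j Q] mult_right_mono[of j i Q]
      mult_left_mono[of 1 "Q - u" i] ij(1,2) u_less_Q Q_pos by simp_all
  have "(2 * Q - u) * i = i * (Q - u) + i * Q"
    by (simp add: algebra_simps)
  then have bounds: "(Q - u) * i < q" "q \<le> (2 * Q - u) * i" "i \<le> q" "3 * Q - u \<le> 2 * q"
    using ij(3) mono \<open>0 < j * Q\<close> u_less_Q by (simp add: mult.commute, linarith+)
  moreover have "0 < i"
    using ij(1,2) by simp
  ultimately show ?thesis
    using that \<open>0 < q\<close> \<open>q < p\<close> pe by blast
qed

theorem CS_contains_below:
  assumes s: "of_int (Q - u) / of_int (P - v) < s" "s \<le> of_int (2 * Q - u) / of_int (2 * P - v)"
    and S1: "S1 = cs_seg P Q 0 (nat u)" and S2: "S2 = cs_seg P Q u (nat (Q - u))"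
    and x: "S2 = x # S2e" "S2 = S2b @ [x]"
  shows "cyc_contains (CS s) ((x + 1) # S2e @ S1 @ S2 @ S1 @ S2b @ [x + 1])"
proof -
  obtain q p where qs: "quotient_of s = (q, p)"
    by (cases "quotient_of s") auto
  have "p > 0" and s_eq: "s = of_int q / of_int p"
    using quotient_of_denom_pos[OF qs] quotient_of_div[OF qs] by simp_all
  then obtain i where "0 < q" "q < p" "0 < i" and pe: "p * Q = q * P + i"
    and bounds: "(Q - u) * i < q" "q \<le> (2 * Q - u) * i" "i \<le> q" "3 * Q - u \<le> 2 * q"
    using below_parameters s unfolding s_eq by blast
  then have CSs: "CS s = cs_seg p q 0 (2 * nat q)"
    using CS_eq_cs_seg[OF qs] s_eq by (simp add: zero_less_divide_iff divide_less_eq)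
  have "cs_seg P Q (u - 2 * Q) (nat (3 * Q - u)) = S2 @ S1 @ S2 @ S1 @ S2"
  proof -
    have "nat (3 * Q - u) = nat Q + (nat Q + nat (Q - u))"
      using u_pos u_less_Q by (simp add: nat_add_distrib[symmetric])
    then have "cs_seg P Q u (nat (3 * Q - u)) = S2 @ S1 @ S2 @ S1 @ S2"
      using cs_seg_add_period cs_seg_period_from_u S1 S2 by simp
    then show ?thesis
      using cs_seg_add_multiple[OF Q_pos, of "2 * Q" P "u - 2 * Q"] by simp
  qed
  then have seg_r: "cs_seg P Q (u - 2 * Q) (nat (3 * Q - u)) = x # (S2e @ S1 @ S2 @ S1 @ S2b) @ [x]"
    using x by (metis append_Cons append_assoc)
  have "cs_seg p q (u - 2 * Q) (nat (3 * Q - u))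
      = nat (int x + 1) # (S2e @ S1 @ S2 @ S1 @ S2b) @ [nat (int x + 1)]"
  proof (rule cs_seg_window[OF _ _ _ seg_r])
    note discrepancy = discrepancy_below[OF \<open>0 < q\<close> pe \<open>0 < i\<close> bounds(1-3)]
    have right_end: "u - 2 * Q + int (nat (3 * Q - u)) = Q"
      using u_pos u_less_Q by simp
    show "discrepancy p q t = 0" if "u - 2 * Q < t" "t < u - 2 * Q + int (nat (3 * Q - u))" for t
      using discrepancy(1) that unfolding right_end by simp
    show "discrepancy p q (u - 2 * Q) = - 1"
      by (rule discrepancy(2))
    show "discrepancy p q (u - 2 * Q + int (nat (3 * Q - u))) = 1"
      unfolding right_end by (rule discrepancy(3))
  qed
  then have "cs_seg p q (u - 2 * Q) (nat (3 * Q - u)) = (x + 1) # S2e @ S1 @ S2 @ S1 @ S2b @ [x + 1]"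
    by (simp add: nat_int_add)
  moreover have "nat (3 * Q - u) \<le> 2 * nat q"
    using bounds(4) by linarith
  ultimately show ?thesis
    using CSs cyc_contains_cs_seg[OF \<open>0 < q\<close>, of "nat (3 * Q - u)" p "u - 2 * Q"] by simp
qed

lemma above_parameters:
  assumes "p > 0" "of_int (Q + u) / of_int (P + v) \<le> (of_int q / of_int p :: rat)"
    "of_int q / of_int p < (of_int u / of_int v :: rat)"
  obtains i where "0 < q" "q < p" "0 < i" "p * Q = q * P - i"
    "u * i < q" "q \<le> (Q + u) * i" "i \<le> q" "2 * Q + u \<le> 2 * q"
proof -
  obtain i j where ij: "0 < j" "j \<le> i" "q = i * u + j * Q" "p = i * v + j * P"
    using above_coordinates assms by blast
  have "0 < j * Q" "0 \<le> i * u" "i * u \<le> i * v" "j * Q < j * P"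
    using ij(1,2) Q_pos Q_less_P u_pos v_bounds(3) by simp_all
  then have "0 < q" "q < p"
    using ij(3,4) by linarith+
  have "q * P - p * Q = i * (u * P - v * Q)"
    by (simp add: ij(3,4) algebra_simps)
  then have pe: "p * Q = q * P - i"
    using det by simp
  have mono: "u \<le> i * u" "Q \<le> j * Q" "j * Q \<le> i * Q" "i \<le> i * u"
    using mult_right_mono[of 1 i u] mult_right_mono[of 1 j Q] mult_right_mono[of j i Q]
      mult_left_mono[of 1 u i] ij(1,2) u_pos Q_pos by simp_all
  have "(Q + u) * i = i * u + i * Q"
    by (simp add: algebra_simps)
  then have bounds: "u * i < q" "q \<le> (Q + u) * i" "i \<le> q" "2 * Q + u \<le> 2 * q"
    using ij(3) mono \<open>0 < j * Q\<close> u_pos by (simp add: mult.commute, linarith+)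
  moreover have "0 < i"
    using ij(1,2) by simp
  ultimately show ?thesis
    using that \<open>0 < q\<close> \<open>q < p\<close> pe by blast
qed

theorem CS_contains_above:
  assumes s: "of_int (Q + u) / of_int (P + v) \<le> s" "s < of_int u / of_int v"
    and S1: "S1 = cs_seg P Q 0 (nat u)" and S2: "S2 = cs_seg P Q u (nat (Q - u))"
    and x: "S1 = x # S1e" "S1 = S1b @ [x]"
  shows "cyc_contains (CS s) ((x - 1) # S1e @ S2 @ S1 @ S2 @ S1b @ [x - 1])"
proof -
  obtain q p where qs: "quotient_of s = (q, p)"
    by (cases "quotient_of s") auto
  have "p > 0" and s_eq: "s = of_int q / of_int p"
    using quotient_of_denom_pos[OF qs] quotient_of_div[OF qs] by simp_all
  then obtain i where "0 < q" "q < p" "0 < i" and pe: "p * Q = q * P - i"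
    and bounds: "u * i < q" "q \<le> (Q + u) * i" "i \<le> q" "2 * Q + u \<le> 2 * q"
    using above_parameters s unfolding s_eq by blast
  then have CSs: "CS s = cs_seg p q 0 (2 * nat q)"
    using CS_eq_cs_seg[OF qs] s_eq by (simp add: zero_less_divide_iff divide_less_eq)
  have "cs_seg P Q (- Q) (nat (2 * Q + u)) = S1 @ S2 @ S1 @ S2 @ S1"
  proof -
    have "nat (2 * Q + u) = nat Q + (nat Q + nat u)"
      using u_pos Q_pos by (simp add: nat_add_distrib[symmetric])
    then have "cs_seg P Q 0 (nat (2 * Q + u)) = S1 @ S2 @ S1 @ S2 @ S1"
      using cs_seg_add_period cs_seg_period_from_0 S1 S2 by simp
    then show ?thesis
      using cs_seg_add_multiple[OF Q_pos, of Q P "- Q"] by simp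
  qed
  then have seg_r: "cs_seg P Q (- Q) (nat (2 * Q + u)) = x # (S1e @ S2 @ S1 @ S2 @ S1b) @ [x]"
    using x by (metis append_Cons append_assoc)
  have "cs_seg p q (- Q) (nat (2 * Q + u))
      = nat (int x + - 1) # (S1e @ S2 @ S1 @ S2 @ S1b) @ [nat (int x + - 1)]"
  proof (rule cs_seg_window[OF _ _ _ seg_r])
    note discrepancy = discrepancy_above[OF \<open>0 < q\<close> pe \<open>0 < i\<close> bounds(1-3)]
    have right_end: "- Q + int (nat (2 * Q + u)) = Q + u"
      using u_pos Q_pos by simp
    show "discrepancy p q t = 0" if "- Q < t" "t < - Q + int (nat (2 * Q + u))" for t
      using discrepancy(1) that unfolding right_end by simp
    show "discrepancy p q (- Q) = - (- 1)"
      using discrepancy(2) by simp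
    show "discrepancy p q (- Q + int (nat (2 * Q + u))) = - 1"
      unfolding right_end by (rule discrepancy(3))
  qed
  moreover have "x = nat (cs_term P Q 0)"
    using x(1) S1 u_pos nth_cs_seg[of 0 "nat u" P Q 0] by simp
  then have "x \<ge> 1"
    using cs_term_ge_1[OF Q_pos Q_less_P, of 0] by simp
  ultimately have "cs_seg p q (- Q) (nat (2 * Q + u)) = (x - 1) # S1e @ S2 @ S1 @ S2 @ S1b @ [x - 1]"
    by simp
  moreover have "nat (2 * Q + u) \<le> 2 * nat q"
    using bounds(4) by linarith
  ultimately show ?thesis
    using CSs cyc_contains_cs_seg[OF \<open>0 < q\<close>, of "nat (2 * Q + u)" p "- Q"] by simp
qed

end

lemma cf_farey_parameters:
  assumes "length ms \<ge> 2" "\<forall>x\<in>set ms. x > 0" "last ms \<ge> 2"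
  obtains Q P u v :: int where "farey_neighbours Q P u v"
    "cf ms = of_int Q / of_int P" "coprime Q P" "cs_term P Q 0 = int (hd ms) + 1"
    "even (length ms) \<Longrightarrow> cf (butlast ms @ [last ms - 1]) = of_int (Q - u) / of_int (P - v) \<and>
       cf (butlast ms @ [last ms - 1, 2]) = of_int (2 * Q - u) / of_int (2 * P - v)"
    "odd (length ms) \<Longrightarrow> cf (butlast ms @ [last ms - 1]) = of_int u / of_int v \<and>
       cf (butlast ms @ [last ms - 1, 2]) = of_int (Q + u) / of_int (P + v)"
proof -
  define xs where "xs = butlast ms"
  have len_xs: "length xs = length ms - 1"
    unfolding xs_def by simp
  have "ms \<noteq> []"
    using assms(1) by auto
  then have ms: "ms = xs @ [last ms]" "xs \<noteq> []"
    using assms(1) len_xs by (auto simp: xs_def simp del: length_butlast)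
  have "\<forall>x\<in>set xs. x > 0"
    using assms(2) unfolding xs_def by (auto dest: in_set_butlastD)
  then obtain Q P b d :: int where fr:
    "cf (xs @ [last ms]) = of_int Q / of_int P" "cf (xs @ [last ms - 1]) = of_int (Q - b) / of_int (P - d)"
    "cf (xs @ [last ms - 1, 2]) = of_int (2 * Q - b) / of_int (2 * P - d)"
    "b * P - d * Q = - ((-1) ^ length xs)" "1 \<le> b" "2 * b \<le> Q" "0 < P"
    using cf_snoc_fractions[OF ms(2) _ assms(3)] by blast
  have cf_ms: "cf ms = of_int Q / of_int P"
    using arg_cong[where f = cf, OF ms(1)] fr(1) by simp
  have "0 < Q"
    using fr(5,6) by simp
  note first = cf_first_quotient_bounds[OF assms cf_ms \<open>0 < Q\<close> fr(7)]
  have "hd ms \<in> set ms"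
    using \<open>ms \<noteq> []\<close> by (rule hd_in_set)
  then have "1 * Q \<le> int (hd ms) * Q"
    using assms(2) \<open>0 < Q\<close> by (intro mult_right_mono) auto
  then have "Q < P"
    using first(1) by simp
  have "ceil_div P Q = int (hd ms) + 1"
    using first \<open>0 < Q\<close> by (intro ceil_div_unique) (simp_all add: algebra_simps)
  then have c0: "cs_term P Q 0 = int (hd ms) + 1"
    unfolding cs_term_def ceil_div_def by simp
  have "(- d) * Q + b * P = 1 \<or> d * Q + (- b) * P = 1"
    using fr(4) by (cases "even (length xs)") (simp_all add: algebra_simps)
  then have coprime: "coprime Q P"
    using coprime_of_bezout by blast
  show ?thesis
  proof (cases "even (length ms)")
    case True
    then have "odd (length xs)"
      using len_xs assms(1) \<open>ms \<noteq> []\<close> by simp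
    then have "farey_neighbours Q P b d"
      using fr(4-6) \<open>Q < P\<close> by unfold_locales (simp_all add: algebra_simps)
    then show ?thesis
      using that[of Q P b d] cf_ms coprime c0 fr(2,3) True unfolding xs_def by blast
  next
    case False
    then have "even (length xs)"
      using len_xs assms(1) \<open>ms \<noteq> []\<close> by simp
    then have "farey_neighbours Q P (Q - b) (P - d)"
      using fr(4-6) \<open>Q < P\<close> by unfold_locales (simp_all add: algebra_simps)
    moreover have "2 * Q - b = Q + (Q - b)" "2 * P - d = P + (P - d)"
      by simp_all
    ultimately show ?thesis
      using that[of Q P "Q - b" "P - d"] cf_ms coprime c0 fr(2,3) False unfolding xs_def by simp
  qed
qed

theorem lemma2p4:
  fixes r s :: rat and ms S1 S2 :: "nat list"
  assumes "0 < r" and "r < 1"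
    and "\<forall>p::int. p \<ge> 2 \<longrightarrow> r \<noteq> 1 / of_int p"
    and "length ms \<ge> 2" and "\<forall>x\<in>set ms. x > 0" and "last ms \<ge> 2"
    and "r = cf ms"
    and "CS_decomp (CS r) (hd ms) S1 S2"
  shows "(even (length ms) \<and>
           cf (butlast ms @ [last ms - 1]) < s \<and> s \<le> cf (butlast ms @ [last ms - 1, 2]) \<longrightarrow>
           (\<forall>S2e S2b. S2 = hd ms # S2e \<and> S2 = S2b @ [hd ms] \<longrightarrow>
              cyc_contains (CS s) ([hd ms + 1] @ S2e @ S1 @ S2 @ S1 @ S2b @ [hd ms + 1])))
       \<and> (odd (length ms) \<and>
           cf (butlast ms @ [last ms - 1, 2]) \<le> s \<and> s < cf (butlast ms @ [last ms - 1]) \<longrightarrow>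
           (\<forall>S1e S1b. S1 = (hd ms + 1) # S1e \<and> S1 = S1b @ [hd ms + 1] \<longrightarrow>
              cyc_contains (CS s) ([hd ms] @ S1e @ S2 @ S1 @ S2 @ S1b @ [hd ms])))"
proof -
  obtain Q P u v where "farey_neighbours Q P u v" and r: "cf ms = of_int Q / of_int P" "coprime Q P"
    and c0: "cs_term P Q 0 = int (hd ms) + 1"
    and even: "even (length ms) \<Longrightarrow> cf (butlast ms @ [last ms - 1]) = of_int (Q - u) / of_int (P - v) \<and>
       cf (butlast ms @ [last ms - 1, 2]) = of_int (2 * Q - u) / of_int (2 * P - v)"
    and odd: "odd (length ms) \<Longrightarrow> cf (butlast ms @ [last ms - 1]) = of_int u / of_int v \<and>
       cf (butlast ms @ [last ms - 1, 2]) = of_int (Q + u) / of_int (P + v)"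
    using cf_farey_parameters[OF assms(4-6)] by blast
  interpret farey_neighbours Q P u v by fact
  have "quotient_of r = (Q, P)"
    using assms(7) r Q_pos Q_less_P by (simp add: quotient_of_of_int_divide)
  then have "CS r = CS_r"
    using CS_eq_cs_seg assms(1,2) by blast
  then have S: "S1 = cs_seg P Q 0 (nat u)" "S2 = cs_seg P Q u (nat (Q - u))"
    using CS_decomp_determined assms(8) c0 by simp_all
  show ?thesis
  proof (intro conjI impI allI)
    fix S2e S2b
    assume s: "even (length ms) \<and> cf (butlast ms @ [last ms - 1]) < s \<and> s \<le> cf (butlast ms @ [last ms - 1, 2])"
      and x: "S2 = hd ms # S2e \<and> S2 = S2b @ [hd ms]"
    have "of_int (Q - u) / of_int (P - v) < s" "s \<le> of_int (2 * Q - u) / of_int (2 * P - v)"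
      using s even by auto
    from CS_contains_below[OF this S conjunct1[OF x] conjunct2[OF x]]
    show "cyc_contains (CS s) ([hd ms + 1] @ S2e @ S1 @ S2 @ S1 @ S2b @ [hd ms + 1])"
      by simp
  next
    fix S1e S1b
    assume s: "odd (length ms) \<and> cf (butlast ms @ [last ms - 1, 2]) \<le> s \<and> s < cf (butlast ms @ [last ms - 1])"
      and x: "S1 = (hd ms + 1) # S1e \<and> S1 = S1b @ [hd ms + 1]"
    have "of_int (Q + u) / of_int (P + v) \<le> s" "s < of_int u / of_int v"
      using s odd by auto
    from CS_contains_above[OF this S conjunct1[OF x] conjunct2[OF x]]
    show "cyc_contains (CS s) ([hd ms] @ S1e @ S2 @ S1 @ S2 @ S1b @ [hd ms])"
      by simp
  qed
qed

end
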